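(* Let $A$ and $B$ be bounded operators on a Banach space $\mathcal{Y}$ such that $(e^{tB})_{t\in\mathbb{R}}$ is a one-parameter group of isometries of $\mathcal{Y}$ and the norm limit $$A^\natural=\lim_{t\to\infty}t^{-1}\int_0^tdu\,e^{-uB}Ae^{uB}$$ exists. Let $D(\cdot),E(\cdot)$ be continuously differentiable functions $\mathbb{R}\to\mathcal{B}(\mathcal{Y})$. Then for every $\tau>0$, with limits in the operator norm of $\mathcal{B}(\mathcal{Y})$: (1) $\displaystyle\lim_{\varepsilon\to0}\int_0^\tau d\tau_1\,D(\tau_1)e^{-(\tau_1/\varepsilon)B}Ae^{(\tau_1/\varepsilon)B}E(\tau_1)=\int_0^\tau d\tau_1\,D(\tau_1)A^\natural E(\tau_1)$; (2) $\displaystyle\lim_{\varepsilon\to0}e^{-(\tau/\varepsilon)B}e^{(\tau/\varepsilon)(B+\varepsilon A)}=\lim_{\varepsilon\to0}e^{(\tau/\varepsilon)(B+\varepsilon A)}e^{-(\tau/\varepsilon)B}=e^{\tau A^\natural}$.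
   Context: $\mathcal{B}(\mathcal{Y})$ denotes the Banach algebra of bounded operators on $\mathcal{Y}$ with the operator norm. *)

theory Defs
  imports "HOL-Analysis.Analysis"
begin

primrec op_pow :: "('a::real_normed_vector \<Rightarrow>\<^sub>L 'a) \<Rightarrow> nat \<Rightarrow> ('a \<Rightarrow>\<^sub>L 'a)" where
  "op_pow B 0 = id_blinfun"
| "op_pow B (Suc n) = B o\<^sub>L op_pow B n"

definition op_exp :: "('a::banach \<Rightarrow>\<^sub>L 'a) \<Rightarrow> ('a \<Rightarrow>\<^sub>L 'a)" where
  "op_exp B = (\<Sum>n. (1 / fact n) *\<^sub>R op_pow B n)"

end

theory Submission
  imports Defs
begin

text \<open>
  Let a(u) = exp(-uB) A exp(uB) and let S(s) be the integral of a over [0, s]. Since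
  \<parallel>a(u)\<parallel> \<le> \<parallel>A\<parallel> and S(s)/s tends to A\<natural>, the functions K(\<epsilon>, t) = \<epsilon> S(t/\<epsilon>) - t A\<natural> tend to 0
  uniformly on [0, \<tau>] as \<epsilon> \<rightarrow> 0, and K(\<epsilon>, -) is a primitive of a(t/\<epsilon>) - A\<natural>. Part (1) follows
  by integrating by parts against the C1 weights D and E. For (2), U(\<epsilon>, t) =
  exp(-(t/\<epsilon>)B) exp((t/\<epsilon>)(B + \<epsilon>A)) solves U' = a(t/\<epsilon>) U with U(\<epsilon>, 0) = 1; differentiating
  exp((T - t)A\<natural>) (1 - K(\<epsilon>, t)) U(\<epsilon>, t) bounds \<parallel>U(\<epsilon>, T) - exp(T A\<natural>)\<parallel> by a multiple of
  sup \<parallel>K(\<epsilon>, -)\<parallel> \<cdot> sup \<parallel>U(\<epsilon>, -)\<parallel>, which for small K also bounds sup \<parallel>U(\<epsilon>, -)\<parallel>. The product in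
  the other order is the conjugate of U(\<epsilon>, \<tau>) by the isometry exp((\<tau>/\<epsilon>)B), which commutes
  with A\<natural>.
\<close>

section \<open>Averaging lemmas in Banach algebras\<close>

lemma norm_mult3_le:
  fixes x y z :: "'b::real_normed_algebra"
  assumes "norm x \<le> p" "norm y \<le> q" "norm z \<le> r"
  shows "norm (x * y * z) \<le> p * q * r"
proof -
  have "norm (x * y * z) \<le> norm x * norm y * norm z"
    by (metis mult_right_mono norm_ge_zero norm_mult_ineq order_trans)
  also have "\<dots> \<le> p * q * r"
    using assms by (intro mult_mono) (auto intro: order_trans[OF norm_ge_zero] mult_nonneg_nonneg)
  finally show ?thesis .
qed

lemma exp_mult_commute:
  fixes x y :: "'b::{real_normed_algebra_1,banach}"
  assumes "x * y = y * x"
  shows "exp x * y = y * exp x"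
  by (simp add: exp_def suminf_mult[symmetric] summable_exp_generic suminf_mult2
      power_commuting_commutes[OF assms])

lemma continuous_on_exp_scaleR [continuous_intros]:
  fixes x :: "'b::{real_normed_algebra_1,banach}"
  shows "continuous_on S f \<Longrightarrow> continuous_on S (\<lambda>t. exp (f t *\<^sub>R x))"
  using continuous_on_compose2[OF continuous_on_vector_derivative
      [OF exp_scaleR_has_vector_derivative_right, of UNIV x]]
  by auto

lemma C1_differentiable_on_bounded_linear_compose:
  assumes "bounded_linear f" and "g C1_differentiable_on S"
  shows "(\<lambda>x. f (g x)) C1_differentiable_on S"
proof -
  obtain g' where g': "\<And>x. x \<in> S \<Longrightarrow> (g has_vector_derivative g' x) (at x)"
    and "continuous_on S g'"
    using assms(2) unfolding C1_differentiable_on_def by blast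
  have "((\<lambda>x. f (g x)) has_vector_derivative f (g' x)) (at x)" if "x \<in> S" for x
    using bounded_linear.has_derivative[OF assms(1) g'[OF that, unfolded has_vector_derivative_def]]
    by (simp add: has_vector_derivative_def linear_scale[OF bounded_linear.linear[OF assms(1)]])
  moreover have "continuous_on S (\<lambda>x. f (g' x))"
    by (rule bounded_linear.continuous_on[OF assms(1) \<open>continuous_on S g'\<close>])
  ultimately show ?thesis
    unfolding C1_differentiable_on_def by (intro exI[of _ "\<lambda>x. f (g' x)"]) auto
qed

lemma continuous_on_Icc_norm_bound:
  fixes f :: "real \<Rightarrow> 'b::real_normed_vector"
  assumes "continuous_on {a..b} f"
  shows "\<exists>M>0. \<forall>t\<in>{a..b}. norm (f t) \<le> M"
  using compact_imp_bounded[OF compact_continuous_image[OF assms compact_Icc]]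
  unfolding bounded_pos by auto

lemma uniform_limit_rescaled_average:
  fixes S :: "real \<Rightarrow> 'b::real_normed_vector"
  assumes average: "((\<lambda>s. (1 / s) *\<^sub>R S s) \<longlongrightarrow> L) at_top"
    and growth: "\<And>s. 0 \<le> s \<Longrightarrow> norm (S s) \<le> C * s"
    and "0 < \<tau>"
  shows "uniform_limit {0..\<tau>} (\<lambda>\<epsilon> t. \<epsilon> *\<^sub>R S (t / \<epsilon>)) (\<lambda>t. t *\<^sub>R L) (at_right 0)"
  unfolding uniform_limit_iff
proof (intro allI impI)
  fix \<eta> :: real
  assume "0 < \<eta>"
  then obtain N where N: "\<And>s. N \<le> s \<Longrightarrow> dist ((1 / s) *\<^sub>R S s) L < \<eta> / \<tau>"
    using tendstoD[OF average, of "\<eta> / \<tau>"] \<open>0 < \<tau>\<close> unfolding eventually_at_top_linorder by auto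
  define s\<^sub>0 where "s\<^sub>0 = max N 1"
  define c where "c = \<bar>C\<bar> + norm L + 1"
  have "0 < s\<^sub>0" "0 < c"
    by (simp_all add: s\<^sub>0_def c_def add_nonneg_pos)
  show "\<forall>\<^sub>F \<epsilon> in at_right 0. \<forall>t\<in>{0..\<tau>}. dist (\<epsilon> *\<^sub>R S (t / \<epsilon>)) (t *\<^sub>R L) < \<eta>"
    unfolding eventually_at_right_field
  proof (intro exI conjI allI impI ballI)
    show "0 < \<eta> / (s\<^sub>0 * c)"
      using \<open>0 < \<eta>\<close> \<open>0 < s\<^sub>0\<close> \<open>0 < c\<close> by simp
    fix \<epsilon> t :: real
    assume "0 < \<epsilon>" "\<epsilon> < \<eta> / (s\<^sub>0 * c)" and t: "t \<in> {0..\<tau>}"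
    show "dist (\<epsilon> *\<^sub>R S (t / \<epsilon>)) (t *\<^sub>R L) < \<eta>"
    proof (cases "s\<^sub>0 \<le> t / \<epsilon>")
      case True
      then have "N \<le> t / \<epsilon>" "0 < t"
        using \<open>0 < \<epsilon>\<close> by (auto simp: s\<^sub>0_def field_simps)
      have "\<epsilon> *\<^sub>R S (t / \<epsilon>) - t *\<^sub>R L = t *\<^sub>R ((1 / (t / \<epsilon>)) *\<^sub>R S (t / \<epsilon>) - L)"
        using \<open>0 < t\<close> by (simp add: scaleR_diff_right)
      then have "dist (\<epsilon> *\<^sub>R S (t / \<epsilon>)) (t *\<^sub>R L) = t * dist ((1 / (t / \<epsilon>)) *\<^sub>R S (t / \<epsilon>)) L"
        using \<open>0 < t\<close> by (simp add: dist_norm)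
      also have "\<dots> < t * (\<eta> / \<tau>)"
        using N[OF \<open>N \<le> t / \<epsilon>\<close>] \<open>0 < t\<close> by (intro mult_strict_left_mono)
      also have "\<dots> \<le> \<eta>"
        using t \<open>0 < \<eta>\<close> \<open>0 < \<tau>\<close> by (simp add: field_simps)
      finally show ?thesis .
    next
      case False
      then have "t < \<epsilon> * s\<^sub>0"
        using \<open>0 < \<epsilon>\<close> by (simp add: field_simps)
      have "norm (\<epsilon> *\<^sub>R S (t / \<epsilon>)) \<le> C * t"
        using growth[of "t / \<epsilon>"] t \<open>0 < \<epsilon>\<close> by (simp add: pos_le_divide_eq mult.commute)
      then have "dist (\<epsilon> *\<^sub>R S (t / \<epsilon>)) (t *\<^sub>R L) \<le> C * t + t * norm L"
        using \<open>0 < \<epsilon>\<close> t norm_triangle_ineq4[of "\<epsilon> *\<^sub>R S (t / \<epsilon>)" "t *\<^sub>R L"]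
        by (simp add: dist_norm)
      also have "\<dots> \<le> t * c"
        using t mult_right_mono[OF abs_ge_self[of C], of t] by (simp add: c_def algebra_simps)
      also have "\<dots> < \<epsilon> * (s\<^sub>0 * c)"
        using \<open>t < \<epsilon> * s\<^sub>0\<close> \<open>0 < c\<close> by (simp add: mult.assoc[symmetric])
      also have "\<dots> < \<eta>"
        using \<open>\<epsilon> < \<eta> / (s\<^sub>0 * c)\<close> \<open>0 < c\<close> \<open>0 < s\<^sub>0\<close> by (simp add: pos_less_divide_eq)
      finally show ?thesis .
    qed
  qed
qed

lemma norm_integral_weighted_derivative_le:
  fixes d d' e e' K k :: "real \<Rightarrow> 'b::{real_normed_algebra,banach}"
  assumes "0 \<le> \<tau>"
    and d: "\<And>t. t \<in> {0..\<tau>} \<Longrightarrow> (d has_vector_derivative d' t) (at t within {0..\<tau>})"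
    and e: "\<And>t. t \<in> {0..\<tau>} \<Longrightarrow> (e has_vector_derivative e' t) (at t within {0..\<tau>})"
    and K: "\<And>t. t \<in> {0..\<tau>} \<Longrightarrow> (K has_vector_derivative k t) (at t within {0..\<tau>})" "K 0 = 0"
    and "continuous_on {0..\<tau>} d'" "continuous_on {0..\<tau>} e'"
    and bounds: "\<And>t. t \<in> {0..\<tau>} \<Longrightarrow> norm (d t) \<le> M" "\<And>t. t \<in> {0..\<tau>} \<Longrightarrow> norm (d' t) \<le> M"
      "\<And>t. t \<in> {0..\<tau>} \<Longrightarrow> norm (e t) \<le> M" "\<And>t. t \<in> {0..\<tau>} \<Longrightarrow> norm (e' t) \<le> M"
      "\<And>t. t \<in> {0..\<tau>} \<Longrightarrow> norm (K t) \<le> \<delta>"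
  shows "norm (integral {0..\<tau>} (\<lambda>t. d t * k t * e t)) \<le> M * \<delta> * M * (1 + 2 * \<tau>)"
proof -
  define r where "r t = d t * K t * e' t + d' t * K t * e t" for t
  have deriv: "((\<lambda>t. d t * K t * e t) has_vector_derivative d t * k t * e t + r t) (at t within {0..\<tau>})"
    if "t \<in> {0..\<tau>}" for t
    using has_vector_derivative_mult[OF has_vector_derivative_mult[OF d[OF that] K(1)[OF that]]
        e[OF that]]
    by (simp add: r_def algebra_simps)
  have ftc: "((\<lambda>t. d t * k t * e t + r t) has_integral d \<tau> * K \<tau> * e \<tau>) {0..\<tau>}"
    using fundamental_theorem_of_calculus[OF \<open>0 \<le> \<tau>\<close> deriv] \<open>K 0 = 0\<close> by simp
  have r_cont: "continuous_on {0..\<tau>} r"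
    using continuous_on_vector_derivative[OF d] continuous_on_vector_derivative[OF e]
      continuous_on_vector_derivative[OF K(1)] \<open>continuous_on {0..\<tau>} d'\<close> \<open>continuous_on {0..\<tau>} e'\<close>
    unfolding r_def by (intro continuous_intros)
  then have "(r has_integral integral {0..\<tau>} r) {0..\<tau>}"
    by (intro integrable_integral integrable_continuous_real)
  from has_integral_diff[OF ftc this]
  have eq: "integral {0..\<tau>} (\<lambda>t. d t * k t * e t) = d \<tau> * K \<tau> * e \<tau> - integral {0..\<tau>} r"
    by (simp add: integral_unique)
  have "norm (d \<tau> * K \<tau> * e \<tau>) \<le> M * \<delta> * M"
    using \<open>0 \<le> \<tau>\<close> by (intro norm_mult3_le bounds) auto
  moreover have r_bound: "norm (r t) \<le> 2 * (M * \<delta> * M)" if "t \<in> {0..\<tau>}" for t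
    using norm_triangle_ineq[of "d t * K t * e' t" "d' t * K t * e t"]
      norm_mult3_le[OF bounds(1,5,4), OF that that that]
      norm_mult3_le[OF bounds(2,5,3), OF that that that]
    unfolding r_def by linarith
  then have "norm (integral {0..\<tau>} r) \<le> 2 * (M * \<delta> * M) * \<tau>"
    using integral_bound[OF \<open>0 \<le> \<tau>\<close> r_cont r_bound] by simp
  ultimately have "norm (d \<tau> * K \<tau> * e \<tau>) + norm (integral {0..\<tau>} r) \<le> M * \<delta> * M * (1 + 2 * \<tau>)"
    by (simp add: algebra_simps)
  then show ?thesis
    unfolding eq using norm_triangle_ineq4 order_trans by blast
qed

lemma tendsto_weighted_integral_of_vanishing_primitive:
  fixes d e :: "real \<Rightarrow> 'b::{real_normed_algebra,banach}" and K k :: "'i \<Rightarrow> real \<Rightarrow> 'b"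
  assumes d: "d C1_differentiable_on {0..\<tau>}" and e: "e C1_differentiable_on {0..\<tau>}"
    and "0 \<le> \<tau>"
    and primitive: "\<forall>\<^sub>F n in F. K n 0 = 0 \<and>
          (\<forall>t\<in>{0..\<tau>}. (K n has_vector_derivative k n t) (at t within {0..\<tau>}))"
    and vanishing: "uniform_limit {0..\<tau>} K (\<lambda>_. 0) F"
  shows "((\<lambda>n. integral {0..\<tau>} (\<lambda>t. d t * k n t * e t)) \<longlongrightarrow> 0) F"
proof (rule tendstoI)
  fix \<eta> :: real
  assume "0 < \<eta>"
  obtain d' where d': "\<And>t. t \<in> {0..\<tau>} \<Longrightarrow> (d has_vector_derivative d' t) (at t)"
    and "continuous_on {0..\<tau>} d'"
    using d unfolding C1_differentiable_on_def by blast
  obtain e' where e': "\<And>t. t \<in> {0..\<tau>} \<Longrightarrow> (e has_vector_derivative e' t) (at t)"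
    and "continuous_on {0..\<tau>} e'"
    using e unfolding C1_differentiable_on_def by blast
  have "continuous_on {0..\<tau>} (\<lambda>t. norm (d t) + norm (d' t) + norm (e t) + norm (e' t))"
    using d e \<open>continuous_on {0..\<tau>} d'\<close> \<open>continuous_on {0..\<tau>} e'\<close>
    by (intro continuous_intros) (simp_all add: C1_differentiable_imp_continuous_on)
  then obtain M where "M > 0"
    and M: "\<And>t. t \<in> {0..\<tau>} \<Longrightarrow> norm (norm (d t) + norm (d' t) + norm (e t) + norm (e' t)) \<le> M"
    by (auto dest: continuous_on_Icc_norm_bound)
  have bounds: "norm (d t) \<le> M" "norm (d' t) \<le> M" "norm (e t) \<le> M" "norm (e' t) \<le> M"
    if "t \<in> {0..\<tau>}" for t
    using M[OF that] by (simp_all add: abs_of_nonneg, smt (verit) norm_ge_zero)+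
  define Q where "Q = M * M * (1 + 2 * \<tau>)"
  define \<delta> where "\<delta> = \<eta> / (2 * Q)"
  have "0 < Q"
    using \<open>0 < M\<close> \<open>0 \<le> \<tau>\<close> by (simp add: Q_def)
  then have "0 < \<delta>"
    using \<open>0 < \<eta>\<close> by (simp add: \<delta>_def)
  have "M * \<delta> * M * (1 + 2 * \<tau>) = \<delta> * Q"
    by (simp add: Q_def algebra_simps)
  also have "\<dots> < \<eta>"
    using \<open>0 < Q\<close> \<open>0 < \<eta>\<close> by (simp add: \<delta>_def)
  finally have "M * \<delta> * M * (1 + 2 * \<tau>) < \<eta>" .
  show "\<forall>\<^sub>F n in F. dist (integral {0..\<tau>} (\<lambda>t. d t * k n t * e t)) 0 < \<eta>"
    using primitive uniform_limitD[OF vanishing \<open>0 < \<delta>\<close>]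
  proof eventually_elim
    case (elim n)
    then have "norm (integral {0..\<tau>} (\<lambda>t. d t * k n t * e t)) \<le> M * \<delta> * M * (1 + 2 * \<tau>)"
      by (intro norm_integral_weighted_derivative_le[where K = "K n", OF \<open>0 \<le> \<tau>\<close> _ _ _ _
            \<open>continuous_on {0..\<tau>} d'\<close> \<open>continuous_on {0..\<tau>} e'\<close>])
        (auto intro: d'[THEN has_vector_derivative_at_within] e'[THEN has_vector_derivative_at_within]
          bounds less_imp_le)
    then show ?case
      using \<open>M * \<delta> * M * (1 + 2 * \<tau>) < \<eta>\<close> by simp
  qed
qed

lemma duhamel_interpolant_has_vector_derivative:
  fixes U G K :: "real \<Rightarrow> 'b::{real_normed_algebra_1,banach}"
  assumes "(U has_vector_derivative G t * U t) (at t within S)"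
    and "(K has_vector_derivative G t - L) (at t within S)"
  shows "((\<lambda>t. exp ((T - t) *\<^sub>R L) * (1 - K t) * U t) has_vector_derivative
    exp ((T - t) *\<^sub>R L) * (L * K t - K t * G t) * U t) (at t within S)"
proof -
  have "((\<lambda>t. T - t) has_vector_derivative -1) (at t within S)"
    by (auto intro!: derivative_eq_intros)
  from vector_diff_chain_within[OF this exp_scaleR_has_vector_derivative_right]
  have "((\<lambda>t. exp ((T - t) *\<^sub>R L)) has_vector_derivative - (exp ((T - t) *\<^sub>R L) * L)) (at t within S)"
    by (simp add: o_def)
  moreover have "((\<lambda>t. 1 - K t) has_vector_derivative - (G t - L)) (at t within S)"
    using has_vector_derivative_diff[OF has_vector_derivative_const assms(2)] by simp
  ultimately have "((\<lambda>t. exp ((T - t) *\<^sub>R L) * (1 - K t) * U t) has_vector_derivative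
      exp ((T - t) *\<^sub>R L) * (1 - K t) * (G t * U t)
      + (exp ((T - t) *\<^sub>R L) * - (G t - L) + - (exp ((T - t) *\<^sub>R L) * L) * (1 - K t)) * U t)
      (at t within S)"
    by (intro has_vector_derivative_mult assms(1))
  then show ?thesis
    by (simp add: algebra_simps)
qed

lemma norm_evolution_minus_exp_le:
  fixes U G K :: "real \<Rightarrow> 'b::{real_normed_algebra_1,banach}"
  assumes "T \<in> {0..\<tau>}"
    and U: "\<And>t. t \<in> {0..\<tau>} \<Longrightarrow> (U has_vector_derivative G t * U t) (at t within {0..\<tau>})"
      "U 0 = 1"
    and K: "\<And>t. t \<in> {0..\<tau>} \<Longrightarrow> (K has_vector_derivative G t - L) (at t within {0..\<tau>})"
      "K 0 = 0"
    and bounds: "\<And>t. t \<in> {0..\<tau>} \<Longrightarrow> norm (K t) \<le> \<delta>"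
      "\<And>t. t \<in> {0..\<tau>} \<Longrightarrow> norm (G t) \<le> C"
      "\<And>t. t \<in> {0..\<tau>} \<Longrightarrow> norm (exp (t *\<^sub>R L)) \<le> M"
      "\<And>t. t \<in> {0..\<tau>} \<Longrightarrow> norm (U t) \<le> N"
  shows "norm (U T - exp (T *\<^sub>R L)) \<le> \<delta> * N * (1 + \<tau> * M * (norm L + C))"
proof -
  have "0 \<le> T" "T \<le> \<tau>" "0 \<le> \<delta>" "0 \<le> C" "0 \<le> M" "0 \<le> N"
    using assms(1) bounds[OF assms(1)] by (auto intro: order_trans[OF norm_ge_zero])
  then have "0 \<le> \<delta> * (norm L + C)"
    by simp
  have sub: "{0..T} \<subseteq> {0..\<tau>}"
    using \<open>T \<le> \<tau>\<close> by auto
  define V where "V t = exp ((T - t) *\<^sub>R L)" for t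
  define \<Theta> where "\<Theta> t = V t * (1 - K t) * U t" for t
  \<comment> \<open>\<open>\<Theta> 0 = exp (T L)\<close>, \<open>\<Theta> T = (1 - K T) U T\<close>, and the derivative of \<open>\<Theta>\<close> is linear in \<open>K\<close>.\<close>
  have "(\<Theta> has_vector_derivative V t * (L * K t - K t * G t) * U t) (at t within {0..T})"
    if "t \<in> {0..T}" for t
    using that \<open>T \<le> \<tau>\<close> unfolding \<Theta>_def[abs_def] V_def
    by (intro duhamel_interpolant_has_vector_derivative
        has_vector_derivative_within_subset[OF _ sub] U K)
      auto
  then have ftc: "((\<lambda>t. V t * (L * K t - K t * G t) * U t) has_integral \<Theta> T - \<Theta> 0) {0..T}"
    by (rule fundamental_theorem_of_calculus[OF \<open>0 \<le> T\<close>])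
  have integrand_bound: "norm (V t * (L * K t - K t * G t) * U t) \<le> M * (\<delta> * (norm L + C)) * N"
    if "t \<in> {0..T}" for t
  proof (rule norm_mult3_le)
    have "t \<in> {0..\<tau>}" "T - t \<in> {0..\<tau>}"
      using that sub by auto
    then show "norm (V t) \<le> M" "norm (U t) \<le> N"
      by (auto simp: V_def intro: bounds)
    have "norm (L * K t - K t * G t) \<le> norm L * norm (K t) + norm (K t) * norm (G t)"
      by (intro order_trans[OF norm_triangle_ineq4] add_mono norm_mult_ineq)
    also have "\<dots> \<le> norm L * \<delta> + \<delta> * C"
      using bounds(1,2)[OF \<open>t \<in> {0..\<tau>}\<close>] \<open>0 \<le> \<delta>\<close>
      by (intro add_mono mult_mono) (auto intro: order_trans[OF norm_ge_zero])
    finally show "norm (L * K t - K t * G t) \<le> \<delta> * (norm L + C)"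
      by (simp add: algebra_simps)
  qed
  have "norm (\<Theta> T - \<Theta> 0) \<le> M * (\<delta> * (norm L + C)) * N * T"
    using has_integral_bound_real[OF _ finite.emptyI ftc, of "M * (\<delta> * (norm L + C)) * N"]
      integrand_bound \<open>0 \<le> T\<close> \<open>0 \<le> M\<close> \<open>0 \<le> N\<close> \<open>0 \<le> \<delta> * (norm L + C)\<close>
    by force
  also have "\<dots> \<le> M * (\<delta> * (norm L + C)) * N * \<tau>"
    using \<open>0 \<le> T\<close> \<open>T \<le> \<tau>\<close> \<open>0 \<le> M\<close> \<open>0 \<le> N\<close> \<open>0 \<le> \<delta> * (norm L + C)\<close>
    by (intro mult_left_mono) auto
  finally have "norm (\<Theta> T - \<Theta> 0) \<le> M * (\<delta> * (norm L + C)) * N * \<tau>" .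
  moreover have "\<Theta> T = U T - K T * U T" "\<Theta> 0 = exp (T *\<^sub>R L)"
    by (simp_all add: \<Theta>_def V_def K(2) U(2) left_diff_distrib)
  moreover have "norm (K T * U T) \<le> \<delta> * N"
    using bounds(1,4)[OF assms(1)] \<open>0 \<le> \<delta>\<close> by (intro order_trans[OF norm_mult_ineq] mult_mono) auto
  ultimately show ?thesis
    using norm_triangle_ineq[of "K T * U T" "U T - K T * U T - exp (T *\<^sub>R L)"]
    by (simp add: algebra_simps)
qed

lemma tendsto_evolution_exp:
  fixes U G K :: "'i \<Rightarrow> real \<Rightarrow> 'b::{real_normed_algebra_1,banach}"
  assumes "0 \<le> \<tau>"
    and evolution: "\<forall>\<^sub>F n in F. U n 0 = 1 \<and> K n 0 = 0 \<and> (\<forall>t\<in>{0..\<tau>}.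
          (U n has_vector_derivative G n t * U n t) (at t within {0..\<tau>}) \<and>
          (K n has_vector_derivative G n t - L) (at t within {0..\<tau>}) \<and> norm (G n t) \<le> C)"
    and vanishing: "uniform_limit {0..\<tau>} K (\<lambda>_. 0) F"
  shows "((\<lambda>n. U n \<tau>) \<longlongrightarrow> exp (\<tau> *\<^sub>R L)) F"
proof (rule tendstoI)
  fix \<eta> :: real
  assume "0 < \<eta>"
  have "continuous_on {0..\<tau>} (\<lambda>t. exp (t *\<^sub>R L))"
    by (intro continuous_intros)
  then obtain M where "0 < M" and M: "\<And>t. t \<in> {0..\<tau>} \<Longrightarrow> norm (exp (t *\<^sub>R L)) \<le> M"
    by (auto dest: continuous_on_Icc_norm_bound)
  define Q where "Q = 1 + \<tau> * M * (norm L + \<bar>C\<bar>)"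
  define \<delta> where "\<delta> = min (1 / (2 * Q)) (\<eta> / (4 * M * Q))"
  have "1 \<le> Q"
    using \<open>0 \<le> \<tau>\<close> \<open>0 < M\<close> by (simp add: Q_def)
  then have "0 < \<delta>" "\<delta> * Q \<le> 1 / 2" "\<delta> * Q * (2 * M) \<le> \<eta> / 2"
    using \<open>0 < \<eta>\<close> \<open>0 < M\<close> by (auto simp: \<delta>_def min_def field_simps)
  show "\<forall>\<^sub>F n in F. dist (U n \<tau>) (exp (\<tau> *\<^sub>R L)) < \<eta>"
    using evolution uniform_limitD[OF vanishing \<open>0 < \<delta>\<close>]
  proof eventually_elim
    case (elim n)
    then have U: "\<And>t. t \<in> {0..\<tau>} \<Longrightarrow> (U n has_vector_derivative G n t * U n t) (at t within {0..\<tau>})"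
      and estimate: "\<And>T N. T \<in> {0..\<tau>} \<Longrightarrow> (\<And>t. t \<in> {0..\<tau>} \<Longrightarrow> norm (U n t) \<le> N) \<Longrightarrow>
          norm (U n T - exp (T *\<^sub>R L)) \<le> \<delta> * N * Q"
      unfolding Q_def
      by (auto intro!: norm_evolution_minus_exp_le[where K = "K n"] M
          intro: order_trans[OF _ abs_ge_self] less_imp_le)
    have "continuous_on {0..\<tau>} (\<lambda>t. norm (U n t))"
      using U by (intro continuous_on_norm continuous_on_vector_derivative)
    then obtain T where T: "T \<in> {0..\<tau>}" and max: "\<And>t. t \<in> {0..\<tau>} \<Longrightarrow> norm (U n t) \<le> norm (U n T)"
      using continuous_attains_sup[of "{0..\<tau>}" "\<lambda>t. norm (U n t)"] \<open>0 \<le> \<tau>\<close> by auto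
    \<comment> \<open>The estimate bounds \<open>U n\<close> in terms of its own supremum, with a factor \<open>\<delta> Q \<le> 1/2\<close>.\<close>
    have "norm (U n T) \<le> norm (exp (T *\<^sub>R L)) + \<delta> * norm (U n T) * Q"
      using norm_triangle_sub[of "U n T" "exp (T *\<^sub>R L)"] estimate[OF T max] by simp
    moreover have "\<delta> * norm (U n T) * Q \<le> norm (U n T) / 2"
      using mult_left_mono[OF \<open>\<delta> * Q \<le> 1 / 2\<close> norm_ge_zero[of "U n T"]] by (simp add: algebra_simps)
    ultimately have "norm (U n T) \<le> 2 * M"
      using M[OF T] by linarith
    have "norm (U n \<tau> - exp (\<tau> *\<^sub>R L)) \<le> \<delta> * (2 * M) * Q"
      using estimate[of \<tau> "2 * M"] max \<open>norm (U n T) \<le> 2 * M\<close> \<open>0 \<le> \<tau>\<close> by force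
    also have "\<dots> < \<eta>"
      using \<open>\<delta> * Q * (2 * M) \<le> \<eta> / 2\<close> \<open>0 < \<eta>\<close> by (simp add: algebra_simps)
    finally show ?case
      by (simp add: dist_norm)
  qed
qed

section \<open>Time averages along a contraction group\<close>

locale flow_average =
  fixes a b a_avg :: "'b::{real_normed_algebra_1,banach}"
  assumes contraction: "\<And>t. norm (exp (t *\<^sub>R b)) \<le> 1"
    and time_average: "((\<lambda>t. (1 / t) *\<^sub>R integral {0..t} (\<lambda>u. exp (- u *\<^sub>R b) * a * exp (u *\<^sub>R b)))
          \<longlongrightarrow> a_avg) at_top"
begin

definition evolved :: "real \<Rightarrow> 'b" where
  "evolved u = exp (- u *\<^sub>R b) * a * exp (u *\<^sub>R b)"

definition avg_error :: "real \<Rightarrow> real \<Rightarrow> 'b" where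
  "avg_error \<epsilon> t = \<epsilon> *\<^sub>R integral {0..t / \<epsilon>} evolved - t *\<^sub>R a_avg"

lemma time_average_evolved: "((\<lambda>t. (1 / t) *\<^sub>R integral {0..t} evolved) \<longlongrightarrow> a_avg) at_top"
  using time_average by (simp add: evolved_def[abs_def])

lemma exp_flow_add: "exp ((s + t) *\<^sub>R b) = exp (s *\<^sub>R b) * exp (t *\<^sub>R b)"
  by (simp add: scaleR_add_left exp_add_commuting)

lemma exp_flow_inverse: "exp (- u *\<^sub>R b) * exp (u *\<^sub>R b) = 1" "exp (u *\<^sub>R b) * exp (- u *\<^sub>R b) = 1"
  using exp_flow_add[of "- u" u] exp_flow_add[of u "- u"] by simp_all

lemma continuous_on_evolved [continuous_intros]:
  "continuous_on S f \<Longrightarrow> continuous_on S (\<lambda>t. evolved (f t))"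
  unfolding evolved_def by (intro continuous_intros)

lemma norm_evolved_le: "norm (evolved u) \<le> norm a"
proof -
  have "norm (exp ((- u) *\<^sub>R b) * a * exp (u *\<^sub>R b)) \<le> 1 * norm a * 1"
    by (rule norm_mult3_le[OF contraction order_refl contraction])
  then show ?thesis
    by (simp add: evolved_def)
qed

lemma evolved_shift: "exp (- v *\<^sub>R b) * evolved u * exp (v *\<^sub>R b) = evolved (u + v)"
  using exp_flow_add[of "- v" "- u"] exp_flow_add[of u v]
  by (simp add: evolved_def algebra_simps mult.assoc)

lemma integral_evolved_shift:
  assumes "0 \<le> v" "0 \<le> t"
  shows "exp (- v *\<^sub>R b) * integral {0..t} evolved * exp (v *\<^sub>R b)
    = integral {0..t + v} evolved - integral {0..v} evolved"
proof -
  have integrable: "evolved integrable_on {x..y}" for x y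
    by (intro integrable_continuous_real continuous_on_evolved continuous_on_id)
  have "((\<lambda>u. exp (- v *\<^sub>R b) * evolved u * exp (v *\<^sub>R b)) has_integral
      exp (- v *\<^sub>R b) * integral {0..t} evolved * exp (v *\<^sub>R b)) {0..t}"
    by (intro has_integral_mult_left has_integral_mult_right integrable_integral integrable)
  then have "exp (- v *\<^sub>R b) * integral {0..t} evolved * exp (v *\<^sub>R b)
      = integral {0..t} (\<lambda>u. evolved (u + v))"
    unfolding evolved_shift by (rule integral_unique[symmetric])
  also have "\<dots> = integral {v..t + v} evolved"
    using integral_shift_real_ivl[of v v "t + v" evolved] by simp
  also have "\<dots> = integral {0..t + v} evolved - integral {0..v} evolved"
    using Henstock_Kurzweil_Integration.integral_combine[OF assms(1) _ integrable, of "t + v"] assms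
    by (simp add: algebra_simps)
  finally show ?thesis .
qed

lemma average_commutes_flow:
  assumes "0 \<le> v"
  shows "a_avg * exp (v *\<^sub>R b) = exp (v *\<^sub>R b) * a_avg"
proof -
  let ?S = "\<lambda>t. integral {0..t} evolved"
  have "((\<lambda>t. exp (- v *\<^sub>R b) * ((1 / t) *\<^sub>R ?S t) * exp (v *\<^sub>R b))
      \<longlongrightarrow> exp (- v *\<^sub>R b) * a_avg * exp (v *\<^sub>R b)) at_top"
    by (intro tendsto_intros time_average_evolved)
  \<comment> \<open>Conjugating by the flow shifts the averaging window by \<open>v\<close>, which does not change the limit.\<close>
  moreover have "((\<lambda>t. exp (- v *\<^sub>R b) * ((1 / t) *\<^sub>R ?S t) * exp (v *\<^sub>R b)) \<longlongrightarrow> a_avg) at_top"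
  proof -
    have "filterlim (\<lambda>t. t + v) at_top at_top"
      using filterlim_tendsto_add_at_top[OF tendsto_const filterlim_ident, of v]
      by (simp add: add.commute)
    from filterlim_compose[OF time_average_evolved this]
    have "((\<lambda>t. (1 + v * (1 / t)) *\<^sub>R ((1 / (t + v)) *\<^sub>R ?S (t + v)) - (1 / t) *\<^sub>R ?S v)
        \<longlongrightarrow> (1 + v * 0) *\<^sub>R a_avg - 0 *\<^sub>R ?S v) at_top"
      by (intro tendsto_intros tendsto_divide_0[OF tendsto_const] filterlim_at_top_imp_at_infinity
          filterlim_ident)
    moreover have "\<forall>\<^sub>F t in at_top.
        (1 + v * (1 / t)) *\<^sub>R ((1 / (t + v)) *\<^sub>R ?S (t + v)) - (1 / t) *\<^sub>R ?S v
        = exp (- v *\<^sub>R b) * ((1 / t) *\<^sub>R ?S t) * exp (v *\<^sub>R b)"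
      using eventually_gt_at_top[of 0]
    proof eventually_elim
      case (elim t)
      then have "(1 + v * (1 / t)) * (1 / (t + v)) = 1 / t"
        using \<open>0 \<le> v\<close> by (simp add: field_simps)
      then show ?case
        using integral_evolved_shift[OF \<open>0 \<le> v\<close>, of t] elim by (simp add: scaleR_diff_right)
    qed
    ultimately show ?thesis
      by (simp add: tendsto_cong)
  qed
  ultimately have "exp (- v *\<^sub>R b) * a_avg * exp (v *\<^sub>R b) = a_avg"
    using tendsto_unique[OF trivial_limit_at_top_linorder] by blast
  then show ?thesis
    by (metis exp_flow_inverse(2) mult.assoc mult_1_left)
qed

lemma avg_error_zero [simp]: "avg_error \<epsilon> 0 = 0"
  by (simp add: avg_error_def)

lemma avg_error_has_vector_derivative:
  assumes "0 < \<epsilon>" "t \<in> {0..\<tau>}"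
  shows "(avg_error \<epsilon> has_vector_derivative evolved (t / \<epsilon>) - a_avg) (at t within {0..\<tau>})"
proof -
  have "((\<lambda>t. t / \<epsilon>) has_vector_derivative 1 / \<epsilon>) (at t within {0..\<tau>})"
    by (auto intro!: derivative_eq_intros simp: divide_inverse)
  moreover have "t / \<epsilon> \<in> {0..\<tau> / \<epsilon>}" "(\<lambda>t. t / \<epsilon>) ` {0..\<tau>} \<subseteq> {0..\<tau> / \<epsilon>}"
    using assms by (auto intro: divide_right_mono)
  then have "((\<lambda>s. integral {0..s} evolved) has_vector_derivative evolved (t / \<epsilon>))
      (at (t / \<epsilon>) within (\<lambda>t. t / \<epsilon>) ` {0..\<tau>})"
    by (intro has_vector_derivative_within_subset[OF integral_has_vector_derivative])
      (auto intro!: continuous_intros)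
  ultimately have "((\<lambda>t. integral {0..t / \<epsilon>} evolved) has_vector_derivative
      (1 / \<epsilon>) *\<^sub>R evolved (t / \<epsilon>)) (at t within {0..\<tau>})"
    by (rule vector_diff_chain_within[unfolded o_def])
  then show ?thesis
    unfolding avg_error_def[abs_def] using \<open>0 < \<epsilon>\<close>
    by (auto intro!: derivative_eq_intros)
qed

lemma uniform_limit_avg_error:
  assumes "0 < \<tau>"
  shows "uniform_limit {0..\<tau>} avg_error (\<lambda>_. 0) (at_right 0)"
proof -
  note time_average_evolved
  moreover have "norm (integral {0..s} evolved) \<le> norm a * s" if "0 \<le> s" for s
    using integral_bound[OF that _ norm_evolved_le] by (simp add: continuous_on_evolved continuous_on_id)
  ultimately have "uniform_limit {0..\<tau>} (\<lambda>\<epsilon> t. \<epsilon> *\<^sub>R integral {0..t / \<epsilon>} evolved) (\<lambda>t. t *\<^sub>R a_avg)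
      (at_right 0)"
    by (rule uniform_limit_rescaled_average[OF _ _ assms])
  then show ?thesis
    by (simp add: uniform_limit_iff avg_error_def dist_norm)
qed

lemma tendsto_integral_weak_coupling:
  fixes d e :: "real \<Rightarrow> 'b"
  assumes d: "d C1_differentiable_on {0..\<tau>}" and e: "e C1_differentiable_on {0..\<tau>}" and "0 < \<tau>"
  shows "((\<lambda>\<epsilon>. integral {0..\<tau>} (\<lambda>t. d t * exp (- (t / \<epsilon>) *\<^sub>R b) * a * exp ((t / \<epsilon>) *\<^sub>R b) * e t))
    \<longlongrightarrow> integral {0..\<tau>} (\<lambda>t. d t * a_avg * e t)) (at_right 0)"
proof -
  have "((\<lambda>\<epsilon>. integral {0..\<tau>} (\<lambda>t. d t * (evolved (t / \<epsilon>) - a_avg) * e t)) \<longlongrightarrow> 0) (at_right 0)"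
    using \<open>0 < \<tau>\<close>
    by (intro tendsto_weighted_integral_of_vanishing_primitive[OF d e _ _ uniform_limit_avg_error])
      (auto simp: eventually_at_right_less avg_error_has_vector_derivative
        intro: eventually_mono[OF eventually_at_right_less[of 0]])
  moreover have "continuous_on {0..\<tau>} d" "continuous_on {0..\<tau>} e"
    using d e by (simp_all add: C1_differentiable_imp_continuous_on)
  then have "integral {0..\<tau>} (\<lambda>t. d t * (evolved (t / \<epsilon>) - a_avg) * e t)
      = integral {0..\<tau>} (\<lambda>t. d t * evolved (t / \<epsilon>) * e t) - integral {0..\<tau>} (\<lambda>t. d t * a_avg * e t)"
    for \<epsilon>
    by (subst integral_diff[symmetric])
      (auto intro!: integrable_continuous_real continuous_intros simp: algebra_simps divide_inverse)
  moreover have "d t * evolved (t / \<epsilon>) * e t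
      = d t * exp (- (t / \<epsilon>) *\<^sub>R b) * a * exp ((t / \<epsilon>) *\<^sub>R b) * e t" for t \<epsilon>
    by (simp add: evolved_def mult.assoc)
  ultimately show ?thesis
    by (simp add: LIM_zero_cancel)
qed

lemma interaction_has_vector_derivative:
  assumes "0 < \<epsilon>"
  shows "((\<lambda>t. exp (- (t / \<epsilon>) *\<^sub>R b) * exp ((t / \<epsilon>) *\<^sub>R (b + \<epsilon> *\<^sub>R a))) has_vector_derivative
    evolved (t / \<epsilon>) * (exp (- (t / \<epsilon>) *\<^sub>R b) * exp ((t / \<epsilon>) *\<^sub>R (b + \<epsilon> *\<^sub>R a)))) (at t within S)"
proof -
  define x y where "x = - (1 / \<epsilon>) *\<^sub>R b" and "y = (1 / \<epsilon>) *\<^sub>R (b + \<epsilon> *\<^sub>R a)"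
  have tx: "t *\<^sub>R x = - (t / \<epsilon>) *\<^sub>R b" and ty: "t *\<^sub>R y = (t / \<epsilon>) *\<^sub>R (b + \<epsilon> *\<^sub>R a)" for t
    by (simp_all add: x_def y_def)
  have "((\<lambda>t. exp (t *\<^sub>R x) * exp (t *\<^sub>R y)) has_vector_derivative
      exp (t *\<^sub>R x) * (exp (t *\<^sub>R y) * y) + x * exp (t *\<^sub>R x) * exp (t *\<^sub>R y)) (at t within S)"
    by (rule has_vector_derivative_mult[OF has_vector_derivative_at_within[OF
          exp_scaleR_has_vector_derivative_left] exp_scaleR_has_vector_derivative_right])
  moreover have "exp (t *\<^sub>R y) * y = y * exp (t *\<^sub>R y)" "x * exp (t *\<^sub>R x) = exp (t *\<^sub>R x) * x"
    by (simp_all add: exp_times_scaleR_commute)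
  then have "exp (t *\<^sub>R x) * (exp (t *\<^sub>R y) * y) + x * exp (t *\<^sub>R x) * exp (t *\<^sub>R y)
      = exp (t *\<^sub>R x) * (x + y) * exp (t *\<^sub>R y)"
    by (simp add: distrib_left distrib_right mult.assoc)
  also have "\<dots> = exp (t *\<^sub>R x) * a * exp (t *\<^sub>R y)"
    using assms by (simp add: x_def y_def scaleR_add_right)
  also have "\<dots> = exp (t *\<^sub>R x) * a * (exp ((t / \<epsilon>) *\<^sub>R b) * exp (- (t / \<epsilon>) *\<^sub>R b)) * exp (t *\<^sub>R y)"
    by (simp only: exp_flow_inverse mult_1_right)
  also have "\<dots> = evolved (t / \<epsilon>) * (exp (t *\<^sub>R x) * exp (t *\<^sub>R y))"
    by (simp only: evolved_def tx mult.assoc)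
  ultimately show ?thesis
    by (simp only: tx ty)
qed

lemma tendsto_exp_weak_coupling_left:
  assumes "0 < \<tau>"
  shows "((\<lambda>\<epsilon>. exp (- (\<tau> / \<epsilon>) *\<^sub>R b) * exp ((\<tau> / \<epsilon>) *\<^sub>R (b + \<epsilon> *\<^sub>R a)))
    \<longlongrightarrow> exp (\<tau> *\<^sub>R a_avg)) (at_right 0)"
  by (rule tendsto_evolution_exp[where G = "\<lambda>\<epsilon> t. evolved (t / \<epsilon>)" and C = "norm a"
      and U = "\<lambda>\<epsilon> t. exp (- (t / \<epsilon>) *\<^sub>R b) * exp ((t / \<epsilon>) *\<^sub>R (b + \<epsilon> *\<^sub>R a))",
      OF less_imp_le[OF assms] _ uniform_limit_avg_error[OF assms]])
    (use eventually_at_right_less[of 0] in \<open>eventually_elim, auto intro!: norm_evolved_le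
      interaction_has_vector_derivative[simplified] avg_error_has_vector_derivative\<close>)

lemma tendsto_exp_weak_coupling_right:
  assumes "0 < \<tau>"
  shows "((\<lambda>\<epsilon>. exp ((\<tau> / \<epsilon>) *\<^sub>R (b + \<epsilon> *\<^sub>R a)) * exp (- (\<tau> / \<epsilon>) *\<^sub>R b))
    \<longlongrightarrow> exp (\<tau> *\<^sub>R a_avg)) (at_right 0)"
proof -
  let ?V = "exp (\<tau> *\<^sub>R a_avg)"
  let ?U = "\<lambda>\<epsilon>. exp (- (\<tau> / \<epsilon>) *\<^sub>R b) * exp ((\<tau> / \<epsilon>) *\<^sub>R (b + \<epsilon> *\<^sub>R a))"
  \<comment> \<open>Conjugating by the flow at time \<open>\<tau>/\<epsilon>\<close> turns \<open>U - V\<close> into the difference at hand,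
    since \<open>V\<close> commutes with the flow; the flow is contractive.\<close>
  have "norm (exp ((\<tau> / \<epsilon>) *\<^sub>R (b + \<epsilon> *\<^sub>R a)) * exp (- (\<tau> / \<epsilon>) *\<^sub>R b) - ?V) \<le> norm (?U \<epsilon> - ?V)"
    if "0 < \<epsilon>" for \<epsilon>
  proof -
    define s where "s = \<tau> / \<epsilon>"
    have "0 \<le> s"
      using that assms by (simp add: s_def)
    have "?V * exp (s *\<^sub>R b) = exp (s *\<^sub>R b) * ?V"
      using average_commutes_flow[OF \<open>0 \<le> s\<close>] by (intro exp_mult_commute) simp
    have "exp (s *\<^sub>R b) * (?U \<epsilon> - ?V) * exp (- s *\<^sub>R b)
        = exp (s *\<^sub>R b) * exp (- s *\<^sub>R b) * exp ((\<tau> / \<epsilon>) *\<^sub>R (b + \<epsilon> *\<^sub>R a)) * exp (- s *\<^sub>R b)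
          - exp (s *\<^sub>R b) * ?V * exp (- s *\<^sub>R b)"
      by (simp only: s_def right_diff_distrib left_diff_distrib mult.assoc)
    also have "\<dots> = exp ((\<tau> / \<epsilon>) *\<^sub>R (b + \<epsilon> *\<^sub>R a)) * exp (- s *\<^sub>R b) - ?V"
      by (simp only: \<open>?V * exp (s *\<^sub>R b) = exp (s *\<^sub>R b) * ?V\<close>[symmetric] exp_flow_inverse
          mult_1_left mult_1_right mult.assoc)
    finally have "exp ((\<tau> / \<epsilon>) *\<^sub>R (b + \<epsilon> *\<^sub>R a)) * exp (- s *\<^sub>R b) - ?V
        = exp (s *\<^sub>R b) * (?U \<epsilon> - ?V) * exp (- s *\<^sub>R b)" ..
    also have "norm \<dots> \<le> 1 * norm (?U \<epsilon> - ?V) * 1"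
      by (rule norm_mult3_le[OF contraction order_refl contraction])
    finally show ?thesis
      by (simp add: s_def)
  qed
  then have "\<forall>\<^sub>F \<epsilon> in at_right 0.
      norm (exp ((\<tau> / \<epsilon>) *\<^sub>R (b + \<epsilon> *\<^sub>R a)) * exp (- (\<tau> / \<epsilon>) *\<^sub>R b) - ?V) \<le> norm (?U \<epsilon> - ?V)"
    by (auto intro: eventually_mono[OF eventually_at_right_less[of 0]])
  moreover have "((\<lambda>\<epsilon>. norm (?U \<epsilon> - ?V)) \<longlongrightarrow> 0) (at_right 0)"
    using tendsto_exp_weak_coupling_left[OF assms] by (simp add: tendsto_norm_zero_iff LIM_zero_iff)
  ultimately show ?thesis
    by (rule Lim_null_comparison[THEN LIM_zero_cancel])
qed

end

section \<open>Bounded operators as a unital Banach algebra\<close>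

text \<open>
  \<open>'a \<Rightarrow>\<^sub>L 'a\<close> is not a \<open>real_normed_algebra_1\<close>: the identity has norm 0 when \<open>'a\<close> is trivial.
  Adjoining a formal unit, with the maximum of the two norms, gives a unital Banach algebra in
  which \<open>op_exp\<close> becomes the exponential (\<open>op_part_exp_embed_op\<close>).
\<close>

typedef (overloaded) 'a op_unitization = "UNIV :: (('a::banach \<Rightarrow>\<^sub>L 'a) \<times> real) set"
  by simp

setup_lifting type_definition_op_unitization

instantiation op_unitization :: (banach) real_normed_algebra_1
begin

lift_definition zero_op_unitization :: "'a op_unitization" is "(0, 0)" .
lift_definition one_op_unitization :: "'a op_unitization" is "(id_blinfun, 1)" .
lift_definition plus_op_unitization :: "'a op_unitization \<Rightarrow> 'a op_unitization \<Rightarrow> 'a op_unitization"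
  is "\<lambda>p q. (fst p + fst q, snd p + snd q)" .
lift_definition minus_op_unitization :: "'a op_unitization \<Rightarrow> 'a op_unitization \<Rightarrow> 'a op_unitization"
  is "\<lambda>p q. (fst p - fst q, snd p - snd q)" .
lift_definition uminus_op_unitization :: "'a op_unitization \<Rightarrow> 'a op_unitization"
  is "\<lambda>p. (- fst p, - snd p)" .
lift_definition scaleR_op_unitization :: "real \<Rightarrow> 'a op_unitization \<Rightarrow> 'a op_unitization"
  is "\<lambda>r p. (r *\<^sub>R fst p, r * snd p)" .
lift_definition times_op_unitization :: "'a op_unitization \<Rightarrow> 'a op_unitization \<Rightarrow> 'a op_unitization"
  is "\<lambda>p q. (fst p o\<^sub>L fst q, snd p * snd q)" .
lift_definition norm_op_unitization :: "'a op_unitization \<Rightarrow> real"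
  is "\<lambda>p. max (norm (fst p)) \<bar>snd p\<bar>" .

definition dist_op_unitization :: "'a op_unitization \<Rightarrow> 'a op_unitization \<Rightarrow> real"
  where "dist_op_unitization x y = norm (x - y)"

definition sgn_op_unitization :: "'a op_unitization \<Rightarrow> 'a op_unitization"
  where "sgn_op_unitization x = inverse (norm x) *\<^sub>R x"

definition uniformity_op_unitization :: "('a op_unitization \<times> 'a op_unitization) filter"
  where "uniformity_op_unitization = (INF e\<in>{0<..}. principal {(x, y). dist x y < e})"

definition open_op_unitization :: "'a op_unitization set \<Rightarrow> bool"
  where "open_op_unitization U \<longleftrightarrow> (\<forall>x\<in>U. \<forall>\<^sub>F (x', y) in uniformity. x' = x \<longrightarrow> y \<in> U)"

instance
proof
  fix x y z :: "'a op_unitization" and r s :: real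
  show "x + y + z = x + (y + z)" "x + y = y + x" "r *\<^sub>R (x + y) = r *\<^sub>R x + r *\<^sub>R y"
    "(r + s) *\<^sub>R x = r *\<^sub>R x + s *\<^sub>R x"
    by (transfer, simp add: algebra_simps)+
  show "0 + x = x" "- x + x = 0" "x - y = x + - y" "r *\<^sub>R s *\<^sub>R x = (r * s) *\<^sub>R x" "1 *\<^sub>R x = x"
    by (transfer, simp)+
  show "x * y * z = x * (y * z)" "1 * x = x" "x * 1 = x"
    by (transfer, auto intro!: blinfun_eqI)+
  show "(x + y) * z = x * z + y * z" "x * (y + z) = x * y + x * z"
    by (transfer, auto intro!: blinfun_eqI simp: blinfun.bilinear_simps algebra_simps)+
  show "r *\<^sub>R x * y = r *\<^sub>R (x * y)" "x * r *\<^sub>R y = r *\<^sub>R (x * y)"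
    by (transfer, auto intro!: blinfun_eqI simp: blinfun.bilinear_simps)+
  show "(0::'a op_unitization) \<noteq> 1"
    by transfer simp
  show "norm (1::'a op_unitization) = 1"
    by transfer (simp add: norm_blinfun_id_le)
  show "norm (x * y) \<le> norm x * norm y"
  proof transfer
    fix p q :: "('a \<Rightarrow>\<^sub>L 'a) \<times> real"
    have "norm (fst p o\<^sub>L fst q) \<le> max (norm (fst p)) \<bar>snd p\<bar> * max (norm (fst q)) \<bar>snd q\<bar>"
      by (rule order_trans[OF norm_blinfun_compose mult_mono]) auto
    moreover have "\<bar>snd p * snd q\<bar> \<le> max (norm (fst p)) \<bar>snd p\<bar> * max (norm (fst q)) \<bar>snd q\<bar>"
      unfolding abs_mult by (rule mult_mono) auto
    ultimately show "max (norm (fst (fst p o\<^sub>L fst q, snd p * snd q)))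
        \<bar>snd (fst p o\<^sub>L fst q, snd p * snd q)\<bar>
        \<le> max (norm (fst p)) \<bar>snd p\<bar> * max (norm (fst q)) \<bar>snd q\<bar>"
      by simp
  qed
  show "norm (x + y) \<le> norm x + norm y"
  proof transfer
    fix p q :: "('a \<Rightarrow>\<^sub>L 'a) \<times> real"
    show "max (norm (fst (fst p + fst q, snd p + snd q))) \<bar>snd (fst p + fst q, snd p + snd q)\<bar>
        \<le> max (norm (fst p)) \<bar>snd p\<bar> + max (norm (fst q)) \<bar>snd q\<bar>"
      using norm_triangle_ineq[of "fst p" "fst q"] abs_triangle_ineq[of "snd p" "snd q"]
        max.cobounded1[of "norm (fst p)" "\<bar>snd p\<bar>"] max.cobounded2[of "norm (fst p)" "\<bar>snd p\<bar>"]
        max.cobounded1[of "norm (fst q)" "\<bar>snd q\<bar>"] max.cobounded2[of "norm (fst q)" "\<bar>snd q\<bar>"]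
      by auto
  qed
  show "norm x = 0 \<longleftrightarrow> x = 0"
    by transfer (auto simp: prod_eq_iff max_def)
  show "norm (r *\<^sub>R x) = \<bar>r\<bar> * norm x"
    by transfer (simp add: abs_mult max_mult_distrib_left)
  show "dist x y = norm (x - y)" "sgn x = inverse (norm x) *\<^sub>R x"
    by (simp_all add: dist_op_unitization_def sgn_op_unitization_def)
  show "uniformity = (INF e\<in>{0<..}. principal {(x, y :: 'a op_unitization). dist x y < e})"
    by (simp add: uniformity_op_unitization_def)
  fix U :: "'a op_unitization set"
  show "open U \<longleftrightarrow> (\<forall>x\<in>U. \<forall>\<^sub>F (x', y) in uniformity. x' = x \<longrightarrow> y \<in> U)"
    by (simp add: open_op_unitization_def)
qed

end

lemma Rep_op_unitization_mult:
  "Rep_op_unitization (x * y)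
    = (fst (Rep_op_unitization x) o\<^sub>L fst (Rep_op_unitization y),
       snd (Rep_op_unitization x) * snd (Rep_op_unitization y))"
  by transfer simp

lemma bounded_linear_Rep_op_unitization: "bounded_linear Rep_op_unitization"
proof
  fix x y :: "'a op_unitization" and r :: real
  show "Rep_op_unitization (x + y) = Rep_op_unitization x + Rep_op_unitization y"
    "Rep_op_unitization (r *\<^sub>R x) = r *\<^sub>R Rep_op_unitization x"
    by (transfer, simp add: prod_eq_iff)+
  have "norm (Rep_op_unitization x) \<le> norm x * 2" for x :: "'a op_unitization"
    by transfer (use norm_Pair_le in \<open>fastforce intro: order_trans\<close>)
  then show "\<exists>K. \<forall>x :: 'a op_unitization. norm (Rep_op_unitization x) \<le> norm x * K"
    by blast
qed

lemma norm_le_norm_Rep_op_unitization: "norm x \<le> norm (Rep_op_unitization x)"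
proof transfer
  fix p :: "('a \<Rightarrow>\<^sub>L 'a) \<times> real"
  show "max (norm (fst p)) \<bar>snd p\<bar> \<le> norm p"
    using norm_fst_le[of "fst p" "snd p"] norm_snd_le[of "snd p" "fst p"] by simp
qed

instance op_unitization :: (banach) banach
proof
  fix X :: "nat \<Rightarrow> 'a op_unitization"
  assume "Cauchy X"
  then have "Cauchy (\<lambda>n. Rep_op_unitization (X n))"
    by (rule bounded_linear.Cauchy[OF bounded_linear_Rep_op_unitization])
  then obtain p where "(\<lambda>n. Rep_op_unitization (X n)) \<longlonglongrightarrow> p"
    by (auto simp: Cauchy_convergent_iff convergent_def)
  then have "(\<lambda>n. Rep_op_unitization (X n) - p) \<longlonglongrightarrow> 0"
    by (rule LIM_zero)
  moreover have "Rep_op_unitization (X n - Abs_op_unitization p) = Rep_op_unitization (X n) - p" for n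
    by transfer (simp add: prod_eq_iff)
  ultimately have "(\<lambda>n. norm (Rep_op_unitization (X n - Abs_op_unitization p))) \<longlonglongrightarrow> 0"
    by (simp add: tendsto_norm_zero_iff)
  with always_eventually have "(\<lambda>n. X n - Abs_op_unitization p) \<longlonglongrightarrow> 0"
    by (rule Lim_null_comparison) (simp add: norm_le_norm_Rep_op_unitization)
  then show "convergent X"
    unfolding convergent_def by (blast dest: LIM_zero_cancel)
qed

lift_definition embed_op :: "('a::banach \<Rightarrow>\<^sub>L 'a) \<Rightarrow> 'a op_unitization"
  is "\<lambda>X :: 'a \<Rightarrow>\<^sub>L 'a. (X, 0 :: real)" .

lift_definition op_part :: "'a::banach op_unitization \<Rightarrow> ('a \<Rightarrow>\<^sub>L 'a)"
  is "fst :: ('a \<Rightarrow>\<^sub>L 'a) \<times> real \<Rightarrow> 'a \<Rightarrow>\<^sub>L 'a" .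

lemma op_part_embed_op [simp]: "op_part (embed_op X) = X"
  by transfer simp

lemma op_part_mult [simp]: "op_part (x * y) = op_part x o\<^sub>L op_part y"
  by transfer simp

lemma embed_op_add [simp]: "embed_op X + embed_op Y = embed_op (X + Y)"
  by transfer simp

lemma embed_op_scaleR [simp]: "r *\<^sub>R embed_op X = embed_op (r *\<^sub>R X)"
  by transfer simp

lemma embed_op_uminus [simp]: "- embed_op X = embed_op (- X)"
  by transfer simp

lemma norm_embed_op [simp]: "norm (embed_op X) = norm X"
  by transfer simp

lemma bounded_linear_embed_op: "bounded_linear embed_op"
  by (rule bounded_linear_intro[where K = 1]) simp_all

lemma bounded_linear_op_part: "bounded_linear op_part"
proof
  fix x y :: "'a op_unitization" and r :: real
  show "op_part (x + y) = op_part x + op_part y" "op_part (r *\<^sub>R x) = r *\<^sub>R op_part x"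
    by (transfer, simp)+
  have "norm (op_part x) \<le> norm x * 1" for x :: "'a op_unitization"
    by transfer simp
  then show "\<exists>K. \<forall>x :: 'a op_unitization. norm (op_part x) \<le> norm x * K"
    by blast
qed

lemma Rep_exp_embed_op: "Rep_op_unitization (exp (embed_op X)) = (op_exp X, 1)"
proof -
  have power: "Rep_op_unitization (embed_op X ^ n) = (op_pow X n, 0 ^ n)" for n
    by (induction n) (simp_all add: one_op_unitization.rep_eq embed_op.rep_eq Rep_op_unitization_mult)
  have "(\<lambda>n. Rep_op_unitization (embed_op X ^ n /\<^sub>R fact n)) sums Rep_op_unitization (exp (embed_op X))"
    by (rule bounded_linear.sums[OF bounded_linear_Rep_op_unitization exp_converges])
  then have "(\<lambda>n. (op_pow X n /\<^sub>R fact n, (0::real) ^ n /\<^sub>R fact n))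
      sums Rep_op_unitization (exp (embed_op X))"
    by (simp add: linear_scale[OF bounded_linear.linear[OF bounded_linear_Rep_op_unitization]] power)
  from bounded_linear.sums[OF bounded_linear_fst this] bounded_linear.sums[OF bounded_linear_snd this]
  have "(\<lambda>n. op_pow X n /\<^sub>R fact n) sums fst (Rep_op_unitization (exp (embed_op X)))"
    "(\<lambda>n. (0::real) ^ n /\<^sub>R fact n) sums snd (Rep_op_unitization (exp (embed_op X)))"
    by simp_all
  moreover have "(\<lambda>n. (0::real) ^ n /\<^sub>R fact n) sums 1"
    using exp_converges[of "0::real"] by simp
  ultimately show ?thesis
    unfolding op_exp_def
    by (auto simp: prod_eq_iff divide_inverse_commute dest: sums_unique sums_unique2)
qed

lemma op_part_exp_embed_op [simp]: "op_part (exp (embed_op X)) = op_exp X"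
  by (simp add: op_part.rep_eq Rep_exp_embed_op)

lemma norm_exp_embed_op: "norm (exp (embed_op X)) = max (norm (op_exp X)) 1"
  by (simp add: norm_op_unitization.rep_eq Rep_exp_embed_op)

lemma exp_embed_op_sandwich:
  "exp (embed_op X) * embed_op Y * exp (embed_op Z) = embed_op (op_exp X o\<^sub>L Y o\<^sub>L op_exp Z)"
  by (simp add: Rep_op_unitization_inject[symmetric] Rep_op_unitization_mult Rep_exp_embed_op
      embed_op.rep_eq)

lemma op_part_integral:
  fixes f :: "real \<Rightarrow> 'a::banach op_unitization"
  assumes "continuous_on {a..b} f"
  shows "op_part (integral {a..b} f) = integral {a..b} (\<lambda>t. op_part (f t))"
  using integral_linear[OF integrable_continuous_real[OF assms] bounded_linear_op_part]
  by (simp add: o_def)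

lemma flow_average_embed_op:
  fixes A B Anat :: "'a::banach \<Rightarrow>\<^sub>L 'a"
  assumes isometric: "\<forall>t x. norm (op_exp (t *\<^sub>R B) x) = norm x"
    and average: "((\<lambda>t. (1 / t) *\<^sub>R integral {0..t} (\<lambda>u. op_exp (- u *\<^sub>R B) o\<^sub>L A o\<^sub>L op_exp (u *\<^sub>R B)))
          \<longlongrightarrow> Anat) at_top"
  shows "flow_average (embed_op A) (embed_op B) (embed_op Anat)"
proof
  show "norm (exp (t *\<^sub>R embed_op B)) \<le> 1" for t
    using isometric by (simp add: norm_exp_embed_op norm_blinfun_bound)
  let ?h = "\<lambda>u. op_exp (- u *\<^sub>R B) o\<^sub>L A o\<^sub>L op_exp (u *\<^sub>R B)"
  have sandwich: "exp (- u *\<^sub>R embed_op B) * embed_op A * exp (u *\<^sub>R embed_op B) = embed_op (?h u)" for u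
    by (simp only: embed_op_scaleR exp_embed_op_sandwich)
  have "continuous_on UNIV (\<lambda>u. op_part (exp (- u *\<^sub>R embed_op B) * embed_op A * exp (u *\<^sub>R embed_op B)))"
    by (intro bounded_linear.continuous_on[OF bounded_linear_op_part] continuous_intros)
  then have cont: "continuous_on {0..t} ?h" for t
    unfolding sandwich op_part_embed_op by (rule continuous_on_subset) simp
  have "integral {0..t} (\<lambda>u. exp (- u *\<^sub>R embed_op B) * embed_op A * exp (u *\<^sub>R embed_op B))
      = embed_op (integral {0..t} ?h)" for t
    unfolding sandwich
    using integral_linear[OF integrable_continuous_real[OF cont] bounded_linear_embed_op]
    by (simp add: o_def)
  then show "((\<lambda>t. (1 / t) *\<^sub>R integral {0..t}
      (\<lambda>u. exp (- u *\<^sub>R embed_op B) * embed_op A * exp (u *\<^sub>R embed_op B))) \<longlongrightarrow> embed_op Anat) at_top"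
    using bounded_linear.tendsto[OF bounded_linear_embed_op average] by simp
qed

theorem lemma4p7:
  fixes A B Anat :: "'a::banach \<Rightarrow>\<^sub>L 'a"
    and D E :: "real \<Rightarrow> ('a \<Rightarrow>\<^sub>L 'a)"
    and \<tau> :: real
  assumes isom: "\<forall>t x. norm (op_exp (t *\<^sub>R B) x) = norm x"
    and Anat: "((\<lambda>t. (1 / t) *\<^sub>R integral {0..t}
                   (\<lambda>u. op_exp (- u *\<^sub>R B) o\<^sub>L A o\<^sub>L op_exp (u *\<^sub>R B)))
               \<longlongrightarrow> Anat) at_top"
    and D: "D C1_differentiable_on UNIV"
    and E: "E C1_differentiable_on UNIV"
    and tau: "\<tau> > 0"
  shows "((\<lambda>\<epsilon>. integral {0..\<tau>}
             (\<lambda>\<tau>1. D \<tau>1 o\<^sub>L op_exp (- (\<tau>1 / \<epsilon>) *\<^sub>R B) o\<^sub>L A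
                    o\<^sub>L op_exp ((\<tau>1 / \<epsilon>) *\<^sub>R B) o\<^sub>L E \<tau>1))
          \<longlongrightarrow> integral {0..\<tau>} (\<lambda>\<tau>1. D \<tau>1 o\<^sub>L Anat o\<^sub>L E \<tau>1)) (at_right 0)
       \<and> ((\<lambda>\<epsilon>. op_exp (- (\<tau> / \<epsilon>) *\<^sub>R B) o\<^sub>L op_exp ((\<tau> / \<epsilon>) *\<^sub>R (B + \<epsilon> *\<^sub>R A)))
          \<longlongrightarrow> op_exp (\<tau> *\<^sub>R Anat)) (at_right 0)
       \<and> ((\<lambda>\<epsilon>. op_exp ((\<tau> / \<epsilon>) *\<^sub>R (B + \<epsilon> *\<^sub>R A)) o\<^sub>L op_exp (- (\<tau> / \<epsilon>) *\<^sub>R B))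
          \<longlongrightarrow> op_exp (\<tau> *\<^sub>R Anat)) (at_right 0)"
proof -
  interpret flow_average "embed_op A" "embed_op B" "embed_op Anat"
    using isom Anat by (rule flow_average_embed_op)
  have C1: "(\<lambda>t. embed_op (D t)) C1_differentiable_on {0..\<tau>}"
    "(\<lambda>t. embed_op (E t)) C1_differentiable_on {0..\<tau>}"
    using D E by (auto intro: C1_differentiable_on_bounded_linear_compose[OF bounded_linear_embed_op]
        C1_differentiable_on_subset)
  then have "continuous_on {0..\<tau>} (\<lambda>t. embed_op (D t))" "continuous_on {0..\<tau>} (\<lambda>t. embed_op (E t))"
    by (simp_all add: C1_differentiable_imp_continuous_on)
  then have "continuous_on {0..\<tau>} (\<lambda>t. embed_op (D t) * exp (- (t / \<epsilon>) *\<^sub>R embed_op B) * embed_op A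
      * exp ((t / \<epsilon>) *\<^sub>R embed_op B) * embed_op (E t))" for \<epsilon>
    unfolding divide_inverse by (intro continuous_intros)
  moreover have "continuous_on {0..\<tau>} (\<lambda>t. embed_op (D t) * embed_op Anat * embed_op (E t))"
    using \<open>continuous_on {0..\<tau>} (\<lambda>t. embed_op (D t))\<close> \<open>continuous_on {0..\<tau>} (\<lambda>t. embed_op (E t))\<close>
    by (intro continuous_intros)
  ultimately show ?thesis
    using bounded_linear.tendsto[OF bounded_linear_op_part tendsto_integral_weak_coupling[OF C1 tau]]
      bounded_linear.tendsto[OF bounded_linear_op_part tendsto_exp_weak_coupling_left[OF tau]]
      bounded_linear.tendsto[OF bounded_linear_op_part tendsto_exp_weak_coupling_right[OF tau]]
    by (simp add: op_part_integral)
qed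

end
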